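(* Let $\Lambda^\epsilon$ ($\epsilon>0$) be the smooth periodic solutions of the regularized problem $$\Lambda^\epsilon_t=\frac{\partial}{\partial s}\frac{d}{d\varphi}J^\epsilon(\Lambda^\epsilon_s+s),\qquad \Lambda^\epsilon(\cdot,0)=\Lambda^\epsilon_0,$$ whose smooth periodic initial data are such that $\varphi^\epsilon_0=\Lambda^\epsilon_{0,s}+s$ satisfy $\sup_\epsilon\|\varphi^\epsilon_0\|_{L_\infty(0,2\pi)}<\infty$ and $\sup_\epsilon\|(\varphi^\epsilon_0)_s\|_{L_1(0,2\pi)}<\infty$. Put $\varphi^\epsilon=\Lambda^\epsilon_s+s$. Then there is a constant $M$, independent of $\epsilon$ and $T$, such that $$\|\varphi^\epsilon\|_{L_\infty(S\times(0,T))}\le M,\qquad \|\varphi^\epsilon\|_{L_\infty(0,T;TV[0,2\pi))}\le M.$$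
   Context: $S$ is the unit circle, identified with $[0,2\pi)$. Let $$J(\varphi)=\frac{\pi}{4}\Big(|\varphi-\tfrac{3\pi}{4}|+|\varphi-\tfrac{\pi}{4}|+|\varphi+\tfrac{\pi}{4}|+|\varphi+\tfrac{3\pi}{4}|\Big).$$ For $\epsilon>0$ put $J^\epsilon(x)=(J\star\rho_\epsilon)(x)+\frac{\epsilon^2}{2}x^2$, where $\rho_\epsilon$ is a standard mollifier supported in $(-\epsilon,\epsilon)$. $TV$ denotes the space of functions of bounded variation. *)

theory Defs
  imports "HOL-Analysis.Analysis" "HOL-Library.Extended_Real"
begin

definition J :: "real \<Rightarrow> real" where
  "J \<phi> = pi / 4 * (\<bar>\<phi> - 3*pi/4\<bar> + \<bar>\<phi> - pi/4\<bar> + \<bar>\<phi> + pi/4\<bar> + \<bar>\<phi> + 3*pi/4\<bar>)"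

definition bump :: "real \<Rightarrow> real" where
  "bump x = (if \<bar>x\<bar> < 1 then exp (- 1 / (1 - x\<^sup>2)) else 0)"

definition mollifier :: "real \<Rightarrow> real" where
  "mollifier x = bump x / integral {-1..1} bump"

definition mollifier_eps :: "real \<Rightarrow> real \<Rightarrow> real" where
  "mollifier_eps \<epsilon> x = mollifier (x / \<epsilon>) / \<epsilon>"

definition Jeps :: "real \<Rightarrow> real \<Rightarrow> real" where
  "Jeps \<epsilon> x = integral UNIV (\<lambda>y. J (x - y) * mollifier_eps \<epsilon> y) + \<epsilon>\<^sup>2 / 2 * x\<^sup>2"

text \<open>C-infinity functions of two real variables: there is a family of everywhere
  (Frechet) differentiable functions containing f and closed under both partial derivatives.\<close>
definition smooth2 :: "(real \<times> real \<Rightarrow> real) \<Rightarrow> bool" where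
  "smooth2 f \<longleftrightarrow> (\<exists>F. f \<in> F \<and> (\<forall>g\<in>F. g differentiable_on UNIV \<and>
      (\<lambda>z. frechet_derivative g (at z) (1, 0)) \<in> F \<and>
      (\<lambda>z. frechet_derivative g (at z) (0, 1)) \<in> F))"

definition smooth1 :: "(real \<Rightarrow> real) \<Rightarrow> bool" where
  "smooth1 f \<longleftrightarrow> (\<exists>F. f \<in> F \<and> (\<forall>g\<in>F. g differentiable_on UNIV \<and> deriv g \<in> F))"

definition total_variation :: "(real \<Rightarrow> real) \<Rightarrow> real set \<Rightarrow> ereal" where
  "total_variation f A = (SUP xs \<in> {xs. sorted xs \<and> set xs \<subseteq> A}.
      ereal (\<Sum>i<length xs - 1. \<bar>f (xs ! Suc i) - f (xs ! i)\<bar>))"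

end

theory Submission
  imports Defs
begin

text \<open>Along the regularized flow, \<open>\<phi> = \<Lambda>\<^sub>s + s\<close> satisfies \<open>\<phi>\<^sub>t = (J\<^sub>\<epsilon>'(\<phi>))\<^sub>s\<^sub>s\<close>
  with \<open>J\<^sub>\<epsilon>'' \<ge> \<epsilon>\<^sup>2\<close>. For \<open>\<delta> > 0\<close> the smoothed total variation \<open>\<integral> \<surd>(\<phi>\<^sub>s\<^sup>2 + \<delta>\<^sup>2) ds\<close>
  over a period has time derivative
  \<open>- \<integral> (J\<^sub>\<epsilon>''(\<phi>) \<phi>\<^sub>s)\<^sub>s \<delta>\<^sup>2 \<phi>\<^sub>s\<^sub>s / (\<phi>\<^sub>s\<^sup>2 + \<delta>\<^sup>2)\<^bsup>3/2\<^esup> ds\<close>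
  after an integration by parts, and completing the square in \<open>\<phi>\<^sub>s\<^sub>s\<close> bounds this by \<open>O(\<delta>\<^sup>2)\<close>.
  Letting \<open>\<delta> \<rightarrow> 0\<close>, the total variation \<open>\<integral> \<bar>\<phi>\<^sub>s\<bar> ds\<close> of \<open>\<phi>(\<cdot>, t)\<close> never exceeds its initial
  value, which is bounded uniformly in \<open>\<epsilon>\<close>. As \<open>\<Lambda>\<close> is periodic, \<open>\<phi> - s = \<Lambda>\<^sub>s\<close> vanishes
  somewhere in each period, whence \<open>\<bar>\<phi>\<bar> \<le> 2\<pi> + \<integral> \<bar>\<phi>\<^sub>s\<bar> ds\<close>.\<close>

section \<open>Partial derivatives in the plane\<close>

definition partial_fst :: "(real \<times> real \<Rightarrow> real) \<Rightarrow> real \<times> real \<Rightarrow> real" where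
  "partial_fst g = (\<lambda>z. frechet_derivative g (at z) (1, 0))"

definition partial_snd :: "(real \<times> real \<Rightarrow> real) \<Rightarrow> real \<times> real \<Rightarrow> real" where
  "partial_snd g = (\<lambda>z. frechet_derivative g (at z) (0, 1))"

lemma has_real_derivative_partial_fst:
  assumes "g differentiable (at (s, t))"
  shows "((\<lambda>r. g (r, t)) has_real_derivative partial_fst g (s, t)) (at s)"
proof -
  let ?D = "frechet_derivative g (at (s, t))"
  have g: "(g has_derivative ?D) (at (s, t))"
    using assms frechet_derivative_works by blast
  have "((\<lambda>r. (r, t)) has_derivative (\<lambda>h. (h, 0))) (at s)"
    by (auto intro!: derivative_eq_intros)
  from has_derivative_compose[OF this g]
  have "((\<lambda>r. g (r, t)) has_derivative (\<lambda>h. ?D (h, 0))) (at s)" by (simp add: o_def)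
  moreover have "?D (h, 0) = partial_fst g (s, t) * h" for h
    using linear_cmul[OF has_derivative_linear[OF g], of h "(1, 0)"] by (simp add: partial_fst_def)
  ultimately show ?thesis by (simp add: has_field_derivative_def)
qed

lemma has_real_derivative_partial_snd:
  assumes "g differentiable (at (s, t))"
  shows "((\<lambda>r. g (s, r)) has_real_derivative partial_snd g (s, t)) (at t)"
proof -
  let ?D = "frechet_derivative g (at (s, t))"
  have g: "(g has_derivative ?D) (at (s, t))"
    using assms frechet_derivative_works by blast
  have "((\<lambda>r. (s, r)) has_derivative (\<lambda>h. (0, h))) (at t)"
    by (auto intro!: derivative_eq_intros)
  from has_derivative_compose[OF this g]
  have "((\<lambda>r. g (s, r)) has_derivative (\<lambda>h. ?D (0, h))) (at t)" by (simp add: o_def)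
  moreover have "?D (0, h) = partial_snd g (s, t) * h" for h
    using linear_cmul[OF has_derivative_linear[OF g], of h "(0, 1)"] by (simp add: partial_snd_def)
  ultimately show ?thesis by (simp add: has_field_derivative_def)
qed

lemma second_difference_eq_partial_snd_fst:
  assumes g: "\<And>z. g differentiable (at z)" and gs: "\<And>z. partial_fst g differentiable (at z)"
    and h: "h > 0"
  obtains x y where "s < x" "x < s + h" "t < y" "y < t + h"
    "g (s + h, t + h) - g (s + h, t) - g (s, t + h) + g (s, t)
       = h * h * partial_snd (partial_fst g) (x, y)"
proof -
  have "\<exists>x. s < x \<and> x < s + h \<and>
      (g (s + h, t + h) - g (s + h, t)) - (g (s, t + h) - g (s, t))
        = (s + h - s) * (partial_fst g (x, t + h) - partial_fst g (x, t))"
    by (rule MVT2[where f = "\<lambda>x. g (x, t + h) - g (x, t)"])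
      (use h in \<open>auto intro!: derivative_eq_intros has_real_derivative_partial_fst g\<close>)
  then obtain x where x: "s < x" "x < s + h"
    "g (s + h, t + h) - g (s + h, t) - g (s, t + h) + g (s, t)
       = h * (partial_fst g (x, t + h) - partial_fst g (x, t))"
    by (auto simp: algebra_simps)
  have "\<exists>y. t < y \<and> y < t + h \<and> partial_fst g (x, t + h) - partial_fst g (x, t)
      = (t + h - t) * partial_snd (partial_fst g) (x, y)"
    by (rule MVT2) (use h in \<open>auto intro!: has_real_derivative_partial_snd gs\<close>)
  then show ?thesis using that x by auto
qed

lemma second_difference_eq_partial_fst_snd:
  assumes g: "\<And>z. g differentiable (at z)" and gt: "\<And>z. partial_snd g differentiable (at z)"
    and h: "h > 0"
  obtains x y where "s < x" "x < s + h" "t < y" "y < t + h"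
    "g (s + h, t + h) - g (s + h, t) - g (s, t + h) + g (s, t)
       = h * h * partial_fst (partial_snd g) (x, y)"
proof -
  have "\<exists>y. t < y \<and> y < t + h \<and>
      (g (s + h, t + h) - g (s, t + h)) - (g (s + h, t) - g (s, t))
        = (t + h - t) * (partial_snd g (s + h, y) - partial_snd g (s, y))"
    by (rule MVT2[where f = "\<lambda>y. g (s + h, y) - g (s, y)"])
      (use h in \<open>auto intro!: derivative_eq_intros has_real_derivative_partial_snd g\<close>)
  then obtain y where y: "t < y" "y < t + h"
    "g (s + h, t + h) - g (s + h, t) - g (s, t + h) + g (s, t)
       = h * (partial_snd g (s + h, y) - partial_snd g (s, y))"
    by (auto simp: algebra_simps)
  have "\<exists>x. s < x \<and> x < s + h \<and> partial_snd g (s + h, y) - partial_snd g (s, y)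
      = (s + h - s) * partial_fst (partial_snd g) (x, y)"
    by (rule MVT2) (use h in \<open>auto intro!: has_real_derivative_partial_fst gt\<close>)
  then show ?thesis using that y by auto
qed

lemma partial_snd_fst_eq_partial_fst_snd:
  assumes g: "\<And>z. g differentiable (at z)"
    and gs: "\<And>z. partial_fst g differentiable (at z)"
    and gt: "\<And>z. partial_snd g differentiable (at z)"
    and cont_st: "continuous_on UNIV (partial_snd (partial_fst g))"
    and cont_ts: "continuous_on UNIV (partial_fst (partial_snd g))"
  shows "partial_snd (partial_fst g) z = partial_fst (partial_snd g) z"
proof (rule ccontr)
  obtain s t where z: "z = (s, t)" by (cases z)
  define A where "A = partial_snd (partial_fst g) (s, t)"
  define B where "B = partial_fst (partial_snd g) (s, t)"
  assume "partial_snd (partial_fst g) z \<noteq> partial_fst (partial_snd g) z"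
  then have e: "\<bar>A - B\<bar> / 2 > 0" by (simp add: A_def B_def z)
  obtain r1 where r1: "r1 > 0"
    "\<And>y. dist y (s, t) < r1 \<Longrightarrow> dist (partial_snd (partial_fst g) y) A < \<bar>A - B\<bar> / 2"
    using cont_st e unfolding continuous_on_eq_continuous_at[OF open_UNIV] continuous_at_eps_delta A_def
    by blast
  obtain r2 where r2: "r2 > 0"
    "\<And>y. dist y (s, t) < r2 \<Longrightarrow> dist (partial_fst (partial_snd g) y) B < \<bar>A - B\<bar> / 2"
    using cont_ts e unfolding continuous_on_eq_continuous_at[OF open_UNIV] continuous_at_eps_delta B_def
    by blast
  define h where "h = min r1 r2 / 2"
  have h: "h > 0" "2 * h \<le> r1" "2 * h \<le> r2" using r1 r2 by (auto simp: h_def)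
  have close: "dist (x, y) (s, t) < 2 * h"
    if "s < x" "x < s + h" "t < y" "y < t + h" for x y
  proof -
    have "dist (x, y) (s, t) \<le> dist (x, y) (s, y) + dist (s, y) (s, t)" by (rule dist_triangle)
    also have "\<dots> = \<bar>x - s\<bar> + \<bar>y - t\<bar>" by (simp add: dist_Pair_Pair dist_real_def)
    finally show ?thesis using that by auto
  qed
  obtain x1 y1 where xy1: "s < x1" "x1 < s + h" "t < y1" "y1 < t + h"
    "g (s + h, t + h) - g (s + h, t) - g (s, t + h) + g (s, t)
       = h * h * partial_snd (partial_fst g) (x1, y1)"
    using second_difference_eq_partial_snd_fst[OF g gs h(1)] .
  obtain x2 y2 where xy2: "s < x2" "x2 < s + h" "t < y2" "y2 < t + h"
    "g (s + h, t + h) - g (s + h, t) - g (s, t + h) + g (s, t)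
       = h * h * partial_fst (partial_snd g) (x2, y2)"
    using second_difference_eq_partial_fst_snd[OF g gt h(1)] .
  have eq: "partial_snd (partial_fst g) (x1, y1) = partial_fst (partial_snd g) (x2, y2)"
    using xy1(5) xy2(5) h(1) by simp
  have "dist (partial_snd (partial_fst g) (x1, y1)) A < \<bar>A - B\<bar> / 2"
    using r1(2) close[OF xy1(1-4)] h by auto
  moreover have "dist (partial_fst (partial_snd g) (x2, y2)) B < \<bar>A - B\<bar> / 2"
    using r2(2) close[OF xy2(1-4)] h by auto
  ultimately have "dist A B < \<bar>A - B\<bar>" using eq by (metis dist_triangle_half_r)
  then show False by (simp add: dist_real_def)
qed

section \<open>Smoothness of the mollifier\<close>

lemma has_real_derivative_zero_of_power2_bound:
  fixes f :: "real \<Rightarrow> real"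
  assumes "\<And>y. \<bar>f y - f x\<bar> \<le> K * (y - x)\<^sup>2"
  shows "(f has_real_derivative 0) (at x)"
proof -
  have "((\<lambda>y. (f y - f x) / (y - x)) \<longlongrightarrow> 0) (at x)"
  proof (rule Lim_null_comparison)
    show "\<forall>\<^sub>F y in at x. norm ((f y - f x) / (y - x)) \<le> K * \<bar>y - x\<bar>"
    proof (rule eventuallyI)
      fix y
      show "norm ((f y - f x) / (y - x)) \<le> K * \<bar>y - x\<bar>"
      proof (cases "y = x")
        case True
        then show ?thesis using assms[of x] by simp
      next
        case False
        have "\<bar>f y - f x\<bar> \<le> (K * \<bar>y - x\<bar>) * \<bar>y - x\<bar>"
          using assms[of y] by (simp add: power2_eq_square abs_mult_self_eq mult.assoc)
        with False show ?thesis by (simp add: abs_divide pos_divide_le_eq)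
      qed
    qed
    have "((\<lambda>y. \<bar>y - x\<bar>) \<longlongrightarrow> \<bar>x - x\<bar>) (at x)"
      by (intro tendsto_intros)
    then show "((\<lambda>y. K * \<bar>y - x\<bar>) \<longlongrightarrow> 0) (at x)"
      using tendsto_mult_right_zero by fastforce
  qed
  then show ?thesis by (simp add: has_field_derivative_iff)
qed

lemma exp_neg_le_4_div_power2:
  fixes u :: real
  assumes u: "u > 0"
  shows "exp (- u) \<le> 4 / u\<^sup>2"
proof -
  have "1 + u / 2 \<le> exp (u / 2)" by (rule exp_ge_add_one_self)
  then have "(1 + u / 2)\<^sup>2 \<le> (exp (u / 2))\<^sup>2" using u by (intro power_mono) auto
  also have "(exp (u / 2))\<^sup>2 = exp u" by (simp add: power2_eq_square exp_add[symmetric])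
  finally have "(1 + u / 2)\<^sup>2 \<le> exp u" .
  moreover have "u\<^sup>2 \<le> 4 * (1 + u / 2)\<^sup>2" using u by (simp add: power2_eq_square algebra_simps)
  ultimately have "u\<^sup>2 * exp (- u) \<le> 4" by (simp add: exp_minus field_simps)
  then show ?thesis using u by (simp add: field_simps)
qed

definition bump' :: "real \<Rightarrow> real" where
  "bump' x = (if \<bar>x\<bar> < 1 then exp (- 1 / (1 - x\<^sup>2)) * (- 2 * x / (1 - x\<^sup>2)\<^sup>2) else 0)"

lemma abs_bump'_le: "\<bar>bump' x\<bar> \<le> 8"
proof (cases "\<bar>x\<bar> < 1")
  case True
  define u where "u = 1 / (1 - x\<^sup>2)"
  have d: "1 - x\<^sup>2 > 0" using True by (simp add: abs_square_less_1)
  then have u: "u > 0" by (simp add: u_def)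
  have "\<bar>bump' x\<bar> = exp (- u) * (2 * \<bar>x\<bar> * u\<^sup>2)"
    using True d by (simp add: bump'_def u_def power_divide abs_mult)
  also have "\<dots> \<le> 4 / u\<^sup>2 * (2 * 1 * u\<^sup>2)"
    using True exp_neg_le_4_div_power2[OF u] by (intro mult_mono) auto
  also have "\<dots> = 8" using u by simp
  finally show ?thesis .
qed (simp add: bump'_def)

text \<open>At \<open>\<bar>x\<bar> = 1\<close> the bump is flat to second order: \<open>exp (-1/(1-y\<^sup>2)) \<le> 4 (1-y\<^sup>2)\<^sup>2\<close>.\<close>

lemma has_real_derivative_bump: "(bump has_real_derivative bump' x) (at x)"
proof -
  consider "\<bar>x\<bar> < 1" | "\<bar>x\<bar> > 1" | "\<bar>x\<bar> = 1" by linarith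
  then show ?thesis
  proof cases
    case 1
    then have d: "1 - x\<^sup>2 \<noteq> 0" by (metis abs_square_less_1 less_irrefl right_minus_eq)
    have "((\<lambda>x. exp (- 1 / (1 - x\<^sup>2))) has_real_derivative
        exp (- 1 / (1 - x\<^sup>2)) * (- 2 * x / (1 - x\<^sup>2)\<^sup>2)) (at x)"
      using d by (auto intro!: derivative_eq_intros simp: power2_eq_square field_simps)
    then have "(bump has_real_derivative exp (- 1 / (1 - x\<^sup>2)) * (- 2 * x / (1 - x\<^sup>2)\<^sup>2)) (at x)"
      by (rule has_field_derivative_transform_within_open[where S = "{y. \<bar>y\<bar> < 1}"])
        (use 1 in \<open>auto simp: bump_def intro!: open_Collect_less continuous_intros\<close>)
    then show ?thesis using 1 by (simp add: bump'_def)
  next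
    case 2
    have "((\<lambda>x. 0) has_real_derivative 0) (at x)" by simp
    then have "(bump has_real_derivative 0) (at x)"
      by (rule has_field_derivative_transform_within_open[where S = "{y. \<bar>y\<bar> > 1}"])
        (use 2 in \<open>auto simp: bump_def intro!: open_Collect_less continuous_intros\<close>)
    then show ?thesis using 2 by (simp add: bump'_def)
  next
    case 3
    have "(bump has_real_derivative 0) (at x)"
    proof (rule has_real_derivative_zero_of_power2_bound[where K = 16])
      fix y :: real
      show "\<bar>bump y - bump x\<bar> \<le> 16 * (y - x)\<^sup>2"
      proof (cases "\<bar>y\<bar> < 1")
        case True
        have d: "1 - y\<^sup>2 > 0" using True by (simp add: abs_square_less_1)
        have "\<bar>bump y - bump x\<bar> = exp (- (1 / (1 - y\<^sup>2)))"
          using True 3 by (simp add: bump_def)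
        also have "\<dots> \<le> 4 * (1 - y\<^sup>2)\<^sup>2"
          using exp_neg_le_4_div_power2[of "1 / (1 - y\<^sup>2)"] d by (simp add: power_one_over)
        also have "\<dots> \<le> 4 * (2 * \<bar>y - x\<bar>)\<^sup>2"
        proof -
          have "1 - y\<^sup>2 = (1 - \<bar>y\<bar>) * (1 + \<bar>y\<bar>)" by (simp add: algebra_simps power2_eq_square)
          also have "\<dots> \<le> \<bar>y - x\<bar> * 2" using True 3 by (intro mult_mono) auto
          finally show ?thesis using d by (intro mult_left_mono power_mono) auto
        qed
        finally show ?thesis by (simp add: power_mult_distrib)
      qed (use 3 in \<open>simp add: bump_def\<close>)
    qed
    then show ?thesis using 3 by (simp add: bump'_def)
  qed
qed

lemma mollifier_eps_eq: "mollifier_eps e x = bump (x / e) * (1 / integral {-1..1} bump / e)"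
  by (simp add: mollifier_eps_def mollifier_def)

lemma continuous_on_bump: "continuous_on A bump"
  using has_real_derivative_bump by (meson DERIV_isCont continuous_at_imp_continuous_on)

lemma mollifier_eps_nonneg:
  assumes "e > 0"
  shows "mollifier_eps e x \<ge> 0"
proof -
  have "integral {-1..1} bump \<ge> 0"
    by (intro integral_nonneg integrable_continuous_interval continuous_on_bump)
      (simp add: bump_def)
  with assms show ?thesis by (simp add: mollifier_eps_eq bump_def)
qed

lemma mollifier_eps_eq_0:
  assumes "e > 0" "e \<le> \<bar>y\<bar>"
  shows "mollifier_eps e y = 0"
proof -
  have "1 \<le> \<bar>y / e\<bar>" using assms by (simp add: abs_divide)
  then show ?thesis by (simp add: mollifier_eps_eq bump_def)
qed

lemma mollifier_eps_has_bounded_derivative: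
  assumes e: "e > 0"
  shows "\<exists>\<rho>' L. (\<forall>x. (mollifier_eps e has_real_derivative \<rho>' x) (at x)) \<and> (\<forall>x. \<bar>\<rho>' x\<bar> \<le> L)"
proof (intro exI conjI allI)
  let ?k = "1 / integral {-1..1} bump / e"
  fix x
  have "((\<lambda>x. x / e) has_real_derivative 1 / e) (at x)"
    using e by (auto intro!: derivative_eq_intros)
  from DERIV_cmult_right[OF DERIV_chain2[OF has_real_derivative_bump this], of ?k]
  show "(mollifier_eps e has_real_derivative bump' (x / e) * (1 / e) * ?k) (at x)"
    by (simp add: mollifier_eps_eq[abs_def])
  show "\<bar>bump' (x / e) * (1 / e) * ?k\<bar> \<le> 8 * (1 / e) * \<bar>?k\<bar>"
    unfolding abs_mult using e abs_bump'_le[of "x / e"] by (intro mult_right_mono) (auto simp: divide_right_mono)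
qed

section \<open>Derivatives of the regularized functional\<close>

lemma integral_from_vanishing_eq:
  fixes f :: "real \<Rightarrow> real"
  assumes cont: "continuous_on UNIV f" and vanish: "\<And>y. y \<le> c \<Longrightarrow> f y = 0" and "a \<le> c"
  shows "integral {a..y} f = integral {c..y} f"
proof (cases "c \<le> y")
  case True
  have "integral {a..c} f + integral {c..y} f = integral {a..y} f"
    by (rule Henstock_Kurzweil_Integration.integral_combine)
      (use assms True in \<open>auto intro!: integrable_continuous_interval continuous_on_subset[OF cont]\<close>)
  moreover have "integral {a..c} f = 0"
    by (rule integral_unique[OF has_integral_is_0]) (use vanish in auto)
  ultimately show ?thesis by simp
next
  case False
  then show ?thesis
    using integral_unique[OF has_integral_is_0, of "{a..y}" f] vanish by force
qed

lemma has_real_derivative_integral_from_vanishing: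
  fixes f :: "real \<Rightarrow> real"
  assumes cont: "continuous_on UNIV f" and vanish: "\<And>y. y \<le> c \<Longrightarrow> f y = 0"
  shows "((\<lambda>y. integral {c..y} f) has_real_derivative f x) (at x)"
proof -
  define a where "a = min c x - 1"
  have a: "a < x" "x < x + 1" "a \<le> c" by (auto simp: a_def)
  have "((\<lambda>y. integral {a..y} f) has_real_derivative f x) (at x within {a..x + 1})"
    by (rule integral_has_real_derivative) (use a in \<open>auto intro: continuous_on_subset[OF cont]\<close>)
  then have "((\<lambda>y. integral {a..y} f) has_real_derivative f x) (at x)"
    using at_within_Icc_at[OF a(1,2)] by simp
  then show ?thesis
    by (rule has_field_derivative_transform_within_open[where S = "{a<..}"])
      (use a integral_from_vanishing_eq[OF cont vanish a(3)] in auto)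
qed

text \<open>For a continuous kernel \<open>\<rho>\<close> supported in \<open>[-e, e]\<close>, the convolution \<open>\<bar>\<cdot>\<bar> \<star> \<rho>\<close> is
  expressed through the primitives of \<open>\<rho>\<close> and \<open>y \<rho> y\<close>; this exhibits its first three derivatives.\<close>

definition kernel_mass :: "(real \<Rightarrow> real) \<Rightarrow> real \<Rightarrow> real \<Rightarrow> real" where
  "kernel_mass \<rho> e z = integral {-e..z} \<rho>"

definition kernel_moment :: "(real \<Rightarrow> real) \<Rightarrow> real \<Rightarrow> real \<Rightarrow> real" where
  "kernel_moment \<rho> e z = integral {-e..z} (\<lambda>y. y * \<rho> y)"

definition abs_conv :: "(real \<Rightarrow> real) \<Rightarrow> real \<Rightarrow> real \<Rightarrow> real" where
  "abs_conv \<rho> e z = 2 * (z * kernel_mass \<rho> e z - kernel_moment \<rho> e z)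
     + kernel_moment \<rho> e e - z * kernel_mass \<rho> e e"

context
  fixes \<rho> :: "real \<Rightarrow> real" and e :: real
  assumes e: "e > 0" and cont: "continuous_on UNIV \<rho>"
    and supp: "\<And>y. e \<le> \<bar>y\<bar> \<Longrightarrow> \<rho> y = 0"
begin

private lemma integrable: "continuous_on UNIV (g :: real \<Rightarrow> real) \<Longrightarrow> g integrable_on {a..b}"
  by (rule integrable_continuous_interval) (auto intro: continuous_on_subset)

private lemma cont_moment: "continuous_on UNIV (\<lambda>y. y * \<rho> y)"
  by (intro continuous_intros cont)

lemma has_real_derivative_kernel_mass: "(kernel_mass \<rho> e has_real_derivative \<rho> x) (at x)"
  unfolding kernel_mass_def[abs_def]
  by (rule has_real_derivative_integral_from_vanishing[OF cont]) (use supp in auto)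

lemma has_real_derivative_kernel_moment:
  "(kernel_moment \<rho> e has_real_derivative x * \<rho> x) (at x)"
  unfolding kernel_moment_def[abs_def]
  by (rule has_real_derivative_integral_from_vanishing[OF cont_moment]) (use supp in auto)

lemma has_real_derivative_abs_conv:
  "(abs_conv \<rho> e has_real_derivative 2 * kernel_mass \<rho> e z - kernel_mass \<rho> e e) (at z)"
  unfolding abs_conv_def[abs_def]
  by (auto intro!: derivative_eq_intros has_real_derivative_kernel_mass
      has_real_derivative_kernel_moment simp: algebra_simps)

private lemma integral_beyond_support:
  fixes g :: "real \<Rightarrow> real"
  assumes "continuous_on UNIV g" "\<And>y. e \<le> y \<Longrightarrow> g y = 0" "e \<le> z"
  shows "integral {-e..z} g = integral {-e..e} g"
proof -
  have "integral {-e..e} g + integral {e..z} g = integral {-e..z} g"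
    by (rule Henstock_Kurzweil_Integration.integral_combine) (use assms e in \<open>auto intro!: integrable\<close>)
  moreover have "integral {e..z} g = 0"
    by (rule integral_unique[OF has_integral_is_0]) (use assms in auto)
  ultimately show ?thesis by simp
qed

private lemma integral_linear_weight:
  "integral {a..b} (\<lambda>y. (z - y) * \<rho> y) = z * integral {a..b} \<rho> - integral {a..b} (\<lambda>y. y * \<rho> y)"
proof -
  have "integral {a..b} (\<lambda>y. z * \<rho> y - y * \<rho> y)
      = integral {a..b} (\<lambda>y. z * \<rho> y) - integral {a..b} (\<lambda>y. y * \<rho> y)"
    by (rule integral_diff) (auto intro!: integrable cont cont_moment continuous_intros)
  then show ?thesis by (simp add: algebra_simps)
qed

lemma integral_abs_diff_mult_kernel:
  "integral {-e..e} (\<lambda>y. \<bar>z - y\<bar> * \<rho> y) = abs_conv \<rho> e z"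
proof -
  consider "z \<le> -e" | "e \<le> z" | "-e < z" "z < e" by linarith
  then show ?thesis
  proof cases
    case 1
    have "kernel_mass \<rho> e z = 0" "kernel_moment \<rho> e z = 0"
      unfolding kernel_mass_def kernel_moment_def
      by (rule integral_unique[OF has_integral_is_0], use supp 1 in auto)+
    moreover have "integral {-e..e} (\<lambda>y. \<bar>z - y\<bar> * \<rho> y) = integral {-e..e} (\<lambda>y. - ((z - y) * \<rho> y))"
      by (rule integral_cong) (use 1 in \<open>auto simp: algebra_simps\<close>)
    ultimately show ?thesis
      by (simp only: integral_neg integral_linear_weight) (simp add: abs_conv_def kernel_mass_def kernel_moment_def)
  next
    case 2
    have "kernel_mass \<rho> e z = kernel_mass \<rho> e e" "kernel_moment \<rho> e z = kernel_moment \<rho> e e"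
      unfolding kernel_mass_def kernel_moment_def
      by (rule integral_beyond_support, use cont cont_moment supp 2 e in auto)+
    moreover have "integral {-e..e} (\<lambda>y. \<bar>z - y\<bar> * \<rho> y) = integral {-e..e} (\<lambda>y. (z - y) * \<rho> y)"
      by (rule integral_cong) (use 2 in auto)
    ultimately show ?thesis
      by (simp only: integral_linear_weight) (simp add: abs_conv_def kernel_mass_def kernel_moment_def algebra_simps)
  next
    case 3
    let ?I = "\<lambda>a b. integral {a..b} (\<lambda>y. \<bar>z - y\<bar> * \<rho> y)"
    have "?I (-e) z + ?I z e = ?I (-e) e"
      by (rule Henstock_Kurzweil_Integration.integral_combine)
        (use 3 in \<open>auto intro!: integrable cont continuous_intros\<close>)
    moreover have "?I (-e) z = z * integral {-e..z} \<rho> - integral {-e..z} (\<lambda>y. y * \<rho> y)"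
      by (subst integral_linear_weight[symmetric], rule integral_cong) auto
    moreover have "?I z e = - (z * integral {z..e} \<rho> - integral {z..e} (\<lambda>y. y * \<rho> y))"
      by (subst integral_linear_weight[symmetric], subst integral_neg[symmetric], rule integral_cong)
        (auto simp: algebra_simps)
    moreover have "z * integral {-e..z} \<rho> + z * integral {z..e} \<rho> = z * integral {-e..e} \<rho>"
      by (subst distrib_left[symmetric], subst Henstock_Kurzweil_Integration.integral_combine)
        (use 3 in \<open>auto intro!: integrable cont\<close>)
    moreover have "integral {-e..z} (\<lambda>y. y * \<rho> y) + integral {z..e} (\<lambda>y. y * \<rho> y)
        = integral {-e..e} (\<lambda>y. y * \<rho> y)"
      by (rule Henstock_Kurzweil_Integration.integral_combine) (use 3 in \<open>auto intro!: integrable cont_moment\<close>)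
    ultimately show ?thesis
      unfolding abs_conv_def kernel_mass_def kernel_moment_def
      by (smt (verit))
  qed
qed

lemma integral_J_convolution:
  "integral UNIV (\<lambda>y. J (x - y) * \<rho> y) = pi / 4 *
     (abs_conv \<rho> e (x - 3*pi/4) + abs_conv \<rho> e (x - pi/4) + abs_conv \<rho> e (x + pi/4) + abs_conv \<rho> e (x + 3*pi/4))"
proof -
  have "integral UNIV (\<lambda>y. J (x - y) * \<rho> y) = integral UNIV (\<lambda>y. if y \<in> {-e..e} then J (x - y) * \<rho> y else 0)"
    by (rule integral_cong) (use supp in auto)
  also have "\<dots> = integral {-e..e} (\<lambda>y. J (x - y) * \<rho> y)" by (rule integral_restrict_UNIV)
  also have "\<dots> = integral {-e..e} (\<lambda>y. pi / 4 * (\<bar>(x - 3*pi/4) - y\<bar> * \<rho> y + \<bar>(x - pi/4) - y\<bar> * \<rho> y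
        + \<bar>(x + pi/4) - y\<bar> * \<rho> y + \<bar>(x + 3*pi/4) - y\<bar> * \<rho> y))"
    by (rule integral_cong) (simp add: J_def algebra_simps)
  also have "\<dots> = pi / 4 * (integral {-e..e} (\<lambda>y. \<bar>(x - 3*pi/4) - y\<bar> * \<rho> y)
        + integral {-e..e} (\<lambda>y. \<bar>(x - pi/4) - y\<bar> * \<rho> y)
        + integral {-e..e} (\<lambda>y. \<bar>(x + pi/4) - y\<bar> * \<rho> y)
        + integral {-e..e} (\<lambda>y. \<bar>(x + 3*pi/4) - y\<bar> * \<rho> y))"
    by (simp add: integral_add integrable cont continuous_intros)
  finally show ?thesis by (simp only: integral_abs_diff_mult_kernel)
qed

end

lemma Jeps_derivatives:
  assumes e: "e > 0"
  obtains a c c' L where "\<And>x. (Jeps e has_real_derivative a x) (at x)"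
    "\<And>x. (a has_real_derivative c x) (at x)" "\<And>x. (c has_real_derivative c' x) (at x)"
    "\<And>x. e\<^sup>2 \<le> c x" "\<And>x. \<bar>c' x\<bar> \<le> L"
proof -
  define \<rho> where "\<rho> = mollifier_eps e"
  obtain \<rho>' L where \<rho>': "\<And>x. (\<rho> has_real_derivative \<rho>' x) (at x)" "\<And>x. \<bar>\<rho>' x\<bar> \<le> L"
    using mollifier_eps_has_bounded_derivative[OF e] unfolding \<rho>_def by blast
  have cont: "continuous_on UNIV \<rho>"
    using \<rho>'(1) by (meson DERIV_isCont continuous_at_imp_continuous_on)
  have supp: "\<And>y. e \<le> \<bar>y\<bar> \<Longrightarrow> \<rho> y = 0" using mollifier_eps_eq_0 e by (simp add: \<rho>_def)
  note mass = has_real_derivative_kernel_mass[OF e cont supp]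
  note conv = has_real_derivative_abs_conv[OF e cont supp]
  define a where "a = (\<lambda>x. pi / 4 * ((2 * kernel_mass \<rho> e (x - 3*pi/4) - kernel_mass \<rho> e e)
     + (2 * kernel_mass \<rho> e (x - pi/4) - kernel_mass \<rho> e e)
     + (2 * kernel_mass \<rho> e (x + pi/4) - kernel_mass \<rho> e e)
     + (2 * kernel_mass \<rho> e (x + 3*pi/4) - kernel_mass \<rho> e e)) + e\<^sup>2 * x)"
  define c where "c = (\<lambda>x. pi / 4 * (2 * \<rho> (x - 3*pi/4) + 2 * \<rho> (x - pi/4)
     + 2 * \<rho> (x + pi/4) + 2 * \<rho> (x + 3*pi/4)) + e\<^sup>2)"
  define c' where "c' = (\<lambda>x. pi / 4 * (2 * \<rho>' (x - 3*pi/4) + 2 * \<rho>' (x - pi/4)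
     + 2 * \<rho>' (x + pi/4) + 2 * \<rho>' (x + 3*pi/4)))"
  have Jeps_eq: "Jeps e = (\<lambda>x. pi / 4 * (abs_conv \<rho> e (x - 3*pi/4) + abs_conv \<rho> e (x - pi/4)
      + abs_conv \<rho> e (x + pi/4) + abs_conv \<rho> e (x + 3*pi/4)) + e\<^sup>2 / 2 * x\<^sup>2)"
    by (rule ext) (use integral_J_convolution[OF e cont supp] in \<open>simp add: Jeps_def \<rho>_def\<close>)
  show ?thesis
  proof
    show "(Jeps e has_real_derivative a x) (at x)" for x
      unfolding Jeps_eq a_def
      by (auto intro!: derivative_eq_intros DERIV_chain2[OF conv] simp: power2_eq_square)
    show "(a has_real_derivative c x) (at x)" for x
      unfolding a_def c_def by (auto intro!: derivative_eq_intros DERIV_chain2[OF mass])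
    show "(c has_real_derivative c' x) (at x)" for x
      unfolding c_def c'_def by (auto intro!: derivative_eq_intros DERIV_chain2[OF \<rho>'(1)])
    show "e\<^sup>2 \<le> c x" for x
      using mollifier_eps_nonneg[OF e] unfolding c_def \<rho>_def
      by (simp add: add_nonneg_nonneg)
    show "\<bar>c' x\<bar> \<le> 2 * pi * L" for x
    proof -
      have "\<bar>c' x\<bar> \<le> pi / 4 * (2 * \<bar>\<rho>' (x - 3*pi/4)\<bar> + 2 * \<bar>\<rho>' (x - pi/4)\<bar>
          + 2 * \<bar>\<rho>' (x + pi/4)\<bar> + 2 * \<bar>\<rho>' (x + 3*pi/4)\<bar>)"
        unfolding c'_def by (simp add: abs_mult)
      also have "\<dots> \<le> pi / 4 * (2 * L + 2 * L + 2 * L + 2 * L)"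
        using \<rho>'(2) by (intro mult_left_mono add_mono) auto
      finally show ?thesis by (simp add: algebra_simps)
    qed
  qed
qed

lemma has_real_derivative_sqrt_power2_add:
  fixes \<delta> :: real
  assumes "\<delta> > 0"
  shows "((\<lambda>u. sqrt (u\<^sup>2 + \<delta>\<^sup>2)) has_real_derivative x / sqrt (x\<^sup>2 + \<delta>\<^sup>2)) (at x)"
proof -
  have "x\<^sup>2 + \<delta>\<^sup>2 > 0" using assms by (simp add: add_nonneg_pos)
  then show ?thesis by (auto intro!: derivative_eq_intros simp: field_simps)
qed

lemma has_real_derivative_divide_sqrt_power2_add:
  fixes \<delta> :: real
  assumes \<delta>: "\<delta> > 0"
  shows "((\<lambda>u. u / sqrt (u\<^sup>2 + \<delta>\<^sup>2)) has_real_derivative \<delta>\<^sup>2 / sqrt (x\<^sup>2 + \<delta>\<^sup>2) ^ 3) (at x)"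
proof -
  define S where "S = sqrt (x\<^sup>2 + \<delta>\<^sup>2)"
  have S: "S > 0" using \<delta> by (simp add: S_def add_nonneg_pos)
  have S2: "S * S = x\<^sup>2 + \<delta>\<^sup>2" by (simp add: S_def power2_eq_square[symmetric])
  have "((\<lambda>u. u / sqrt (u\<^sup>2 + \<delta>\<^sup>2)) has_real_derivative (1 * S - x * (x / S)) / (S * S)) (at x)"
    using DERIV_divide[OF DERIV_ident has_real_derivative_sqrt_power2_add[OF \<delta>, of x]] S
    unfolding S_def by fastforce
  moreover have "(1 * S - x * (x / S)) / (S * S) = \<delta>\<^sup>2 / S ^ 3"
    using S S2 by (simp add: field_simps power2_eq_square power3_eq_cube)
  ultimately show ?thesis by (simp add: S_def)
qed

text \<open>Completing the square in \<open>y\<close>. With \<open>x = \<phi>\<^sub>s\<close>, \<open>y = \<phi>\<^sub>s\<^sub>s\<close>, \<open>c = J\<^sub>\<epsilon>''(\<phi>)\<close> and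
  \<open>d\<close> the third derivative of \<open>J\<^sub>\<epsilon>\<close> at \<open>\<phi>\<close>, the left-hand side is the integrand of the
  time derivative of the smoothed total variation.\<close>

lemma dissipation_le:
  fixes x y c d e L \<delta> :: real
  assumes c: "e\<^sup>2 \<le> c" and e: "e > 0" and d: "\<bar>d\<bar> \<le> L" and \<delta>: "\<delta> > 0"
  shows "- ((d * x * x + c * y) * (\<delta>\<^sup>2 / sqrt (x\<^sup>2 + \<delta>\<^sup>2) ^ 3 * y))
    \<le> \<delta>\<^sup>2 * L\<^sup>2 * sqrt (x\<^sup>2 + \<delta>\<^sup>2) / (4 * e\<^sup>2)"
proof -
  define S where "S = sqrt (x\<^sup>2 + \<delta>\<^sup>2)"
  have S: "S > 0" using \<delta> by (simp add: S_def add_nonneg_pos)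
  have S2: "S\<^sup>2 = x\<^sup>2 + \<delta>\<^sup>2" by (simp add: S_def)
  define k where "k = \<delta>\<^sup>2 / S ^ 3"
  have k: "k \<ge> 0" using S by (simp add: k_def)
  have c_pos: "c > 0" using c e by (meson less_le_trans zero_less_power)
  have "- (d * x * x * y + c * y * y) \<le> d\<^sup>2 * (x\<^sup>2)\<^sup>2 / (4 * c)"
  proof -
    have "0 \<le> (c * y + d * x * x / 2)\<^sup>2" by simp
    then have "- (c * (d * x * x * y + c * y * y)) \<le> d\<^sup>2 * (x\<^sup>2)\<^sup>2 / 4"
      by (simp add: power2_eq_square algebra_simps)
    then show ?thesis using c_pos by (simp add: field_simps)
  qed
  also have "\<dots> \<le> L\<^sup>2 * (S\<^sup>2)\<^sup>2 / (4 * e\<^sup>2)"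
  proof (rule frac_le)
    have "d\<^sup>2 \<le> L\<^sup>2" using d abs_le_square_iff by fastforce
    moreover have "(x\<^sup>2)\<^sup>2 \<le> (S\<^sup>2)\<^sup>2" unfolding S2 by (intro power_mono) auto
    ultimately show "d\<^sup>2 * (x\<^sup>2)\<^sup>2 \<le> L\<^sup>2 * (S\<^sup>2)\<^sup>2" by (intro mult_mono) auto
  qed (use c e in auto)
  finally have quadratic: "- (d * x * x * y + c * y * y) \<le> L\<^sup>2 * (S\<^sup>2)\<^sup>2 / (4 * e\<^sup>2)" .
  have "- ((d * x * x + c * y) * (k * y)) = k * (- (d * x * x * y + c * y * y))"
    by (simp add: algebra_simps)
  also have "\<dots> \<le> k * (L\<^sup>2 * (S\<^sup>2)\<^sup>2 / (4 * e\<^sup>2))"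
    using quadratic k by (rule mult_left_mono)
  also have "\<dots> = \<delta>\<^sup>2 * L\<^sup>2 * S / (4 * e\<^sup>2)"
    using S by (simp add: k_def field_simps power2_eq_square power3_eq_cube)
  finally show ?thesis by (simp only: k_def S_def)
qed

section \<open>Total variation dominated by an integral\<close>

lemma sum_abs_diff_le_integral:
  fixes \<phi> h :: "real \<Rightarrow> real"
  assumes h_cont: "continuous_on UNIV h" and h_nonneg: "\<And>x. h x \<ge> 0"
    and diff_le: "\<And>a b. a \<le> b \<Longrightarrow> \<bar>\<phi> b - \<phi> a\<bar> \<le> integral {a..b} h"
    and "sorted xs" "set xs \<subseteq> {lo..hi}"
  shows "(\<Sum>i<length xs - 1. \<bar>\<phi> (xs ! Suc i) - \<phi> (xs ! i)\<bar>) \<le> integral {lo..hi} h"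
  using assms(4,5)
proof (induction xs arbitrary: lo)
  have integrable: "h integrable_on {a..b}" for a b
    by (rule integrable_continuous_interval) (rule continuous_on_subset[OF h_cont], auto)
  have nonneg: "integral {a..b} h \<ge> 0" for a b
    by (rule integral_nonneg[OF integrable]) (use h_nonneg in auto)
  {
    case Nil
    then show ?case using nonneg by simp
  next
    case (Cons x xs)
    show ?case
    proof (cases xs)
      case Nil
      then show ?thesis using nonneg by simp
    next
      case (Cons y ys)
      have xy: "x \<le> y" "lo \<le> x" "y \<le> hi" "set xs \<subseteq> {y..hi}"
        using Cons \<open>sorted (x # xs)\<close> \<open>set (x # xs) \<subseteq> {lo..hi}\<close> by auto
      have "(\<Sum>i<length (x # xs) - 1. \<bar>\<phi> ((x # xs) ! Suc i) - \<phi> ((x # xs) ! i)\<bar>)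
          = \<bar>\<phi> y - \<phi> x\<bar> + (\<Sum>i<length xs - 1. \<bar>\<phi> (xs ! Suc i) - \<phi> (xs ! i)\<bar>)"
      proof -
        have length: "length (x # xs) - 1 = Suc (length xs - 1)" using Cons by simp
        show ?thesis unfolding length sum.lessThan_Suc_shift using Cons by simp
      qed
      also have "\<dots> \<le> integral {x..y} h + integral {y..hi} h"
        using diff_le[OF xy(1)] Cons.IH[OF _ xy(4)] \<open>sorted (x # xs)\<close> by fastforce
      also have "\<dots> = integral {x..hi} h"
        by (rule Henstock_Kurzweil_Integration.integral_combine) (use xy integrable in auto)
      also have "\<dots> \<le> integral {lo..hi} h"
        using Henstock_Kurzweil_Integration.integral_combine[of lo x hi h] xy integrable nonneg[of lo x]
        by force
      finally show ?thesis .
    qed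
  }
qed

lemma total_variation_le_integral:
  fixes \<phi> h :: "real \<Rightarrow> real"
  assumes "continuous_on UNIV h" "\<And>x. h x \<ge> 0"
    and "\<And>a b. a \<le> b \<Longrightarrow> \<bar>\<phi> b - \<phi> a\<bar> \<le> integral {a..b} h"
    and "S \<subseteq> {lo..hi}"
  shows "total_variation \<phi> S \<le> ereal (integral {lo..hi} h)"
  unfolding total_variation_def
  by (rule SUP_least) (use assms sum_abs_diff_le_integral[of h \<phi> _ lo hi] in auto)

section \<open>Smooth periodic solutions of the regularized equation\<close>

text \<open>\<open>F\<close> witnesses smoothness as in \<open>smooth2\<close>; \<open>A\<close> plays the role of \<open>J\<^sub>\<epsilon>'\<close>,
  with \<open>A' = C \<ge> e\<^sup>2\<close> and \<open>C'\<close> bounded by \<open>L\<close>.\<close>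

locale periodic_solution =
  fixes \<Lambda> :: "real \<Rightarrow> real \<Rightarrow> real" and F :: "(real \<times> real \<Rightarrow> real) set"
    and A C C' :: "real \<Rightarrow> real" and e L :: real
  assumes e_pos: "e > 0"
    and in_family: "(\<lambda>z. \<Lambda> (fst z) (snd z)) \<in> F"
    and family_differentiable: "\<And>g. g \<in> F \<Longrightarrow> g differentiable_on UNIV"
    and family_partial_fst: "\<And>g. g \<in> F \<Longrightarrow> partial_fst g \<in> F"
    and family_partial_snd: "\<And>g. g \<in> F \<Longrightarrow> partial_snd g \<in> F"
    and periodic: "\<And>s t. t \<ge> 0 \<Longrightarrow> \<Lambda> (s + 2*pi) t = \<Lambda> s t"
    and pde: "\<And>s t. t > 0 \<Longrightarrow>
      deriv (\<lambda>\<tau>. \<Lambda> s \<tau>) t = deriv (\<lambda>\<sigma>. A (deriv (\<lambda>r. \<Lambda> r t) \<sigma> + \<sigma>)) s"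
    and has_derivative_A: "\<And>x. (A has_real_derivative C x) (at x)"
    and has_derivative_C: "\<And>x. (C has_real_derivative C' x) (at x)"
    and C_ge: "\<And>x. e\<^sup>2 \<le> C x"
    and C'_bounded: "\<And>x. \<bar>C' x\<bar> \<le> L"
begin

definition "Lam = (\<lambda>z. \<Lambda> (fst z) (snd z))"
definition "Lam_s = partial_fst Lam"
definition "Lam_ss = partial_fst Lam_s"
definition "Lam_t = partial_snd Lam"

lemma in_family_derivatives:
  "Lam \<in> F" "Lam_s \<in> F" "Lam_ss \<in> F" "Lam_t \<in> F" "partial_fst Lam_t \<in> F"
  "partial_fst Lam_ss \<in> F" "partial_snd Lam_ss \<in> F" "partial_fst (partial_fst Lam_t) \<in> F"
  using in_family family_partial_fst family_partial_snd
  by (auto simp: Lam_def Lam_s_def Lam_ss_def Lam_t_def)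

lemma family_differentiable_at: "g \<in> F \<Longrightarrow> g differentiable (at z)"
  using family_differentiable[of g] by (cases z) (auto simp: differentiable_on_def)

lemma family_continuous_on: "g \<in> F \<Longrightarrow> continuous_on S g"
  by (meson family_differentiable differentiable_imp_continuous_on continuous_on_subset subset_UNIV)

lemma family_continuous_on_slice: "g \<in> F \<Longrightarrow> continuous_on S (\<lambda>s. g (s, t))"
  by (rule continuous_on_compose2[OF family_continuous_on]) (auto intro!: continuous_intros)

lemma family_has_derivative_fst:
  "g \<in> F \<Longrightarrow> ((\<lambda>r. g (r, t)) has_real_derivative partial_fst g (s, t)) (at s)"
  by (rule has_real_derivative_partial_fst[OF family_differentiable_at])

lemma family_has_derivative_snd:
  "g \<in> F \<Longrightarrow> ((\<lambda>r. g (s, r)) has_real_derivative partial_snd g (s, t)) (at t)"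
  by (rule has_real_derivative_partial_snd[OF family_differentiable_at])

lemma family_partial_snd_fst: "g \<in> F \<Longrightarrow> partial_snd (partial_fst g) = partial_fst (partial_snd g)"
  by (rule ext, rule partial_snd_fst_eq_partial_fst_snd)
    (auto intro: family_differentiable_at family_continuous_on family_partial_fst family_partial_snd)

lemma deriv_\<Lambda>_eq_Lam_s: "deriv (\<lambda>r. \<Lambda> r t) s = Lam_s (s, t)"
  using family_has_derivative_fst[OF in_family_derivatives(1), of t s]
  by (simp add: Lam_s_def Lam_def DERIV_imp_deriv)

lemma has_real_derivative_phi:
  "((\<lambda>r. Lam_s (r, t) + r) has_real_derivative Lam_ss (s, t) + 1) (at s)"
  using family_has_derivative_fst[OF in_family_derivatives(2), of t s]
  by (auto intro!: derivative_eq_intros simp: Lam_ss_def)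

lemma Lam_t_eq:
  assumes "t > 0"
  shows "Lam_t (s, t) = C (Lam_s (s, t) + s) * (Lam_ss (s, t) + 1)"
proof -
  have "Lam_t (s, t) = deriv (\<lambda>\<tau>. \<Lambda> s \<tau>) t"
    using family_has_derivative_snd[OF in_family_derivatives(1), of s t]
    by (simp add: Lam_t_def Lam_def DERIV_imp_deriv)
  also have "\<dots> = deriv (\<lambda>\<sigma>. A (Lam_s (\<sigma>, t) + \<sigma>)) s"
    using pde[OF assms] by (simp add: deriv_\<Lambda>_eq_Lam_s)
  also have "\<dots> = C (Lam_s (s, t) + s) * (Lam_ss (s, t) + 1)"
    by (rule DERIV_imp_deriv[OF DERIV_chain2[OF has_derivative_A has_real_derivative_phi]])
  finally show ?thesis .
qed

lemma partial_fst_Lam_t_eq: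
  assumes "t > 0"
  shows "partial_fst Lam_t (s, t) = C' (Lam_s (s, t) + s) * (Lam_ss (s, t) + 1) * (Lam_ss (s, t) + 1)
    + C (Lam_s (s, t) + s) * partial_fst Lam_ss (s, t)"
proof -
  have "((\<lambda>r. C (Lam_s (r, t) + r) * (Lam_ss (r, t) + 1)) has_real_derivative
      C' (Lam_s (s, t) + s) * (Lam_ss (s, t) + 1) * (Lam_ss (s, t) + 1)
      + C (Lam_s (s, t) + s) * partial_fst Lam_ss (s, t)) (at s)"
    using DERIV_chain2[OF has_derivative_C has_real_derivative_phi]
      family_has_derivative_fst[OF in_family_derivatives(3), of t s]
    by (auto intro!: derivative_eq_intros simp: algebra_simps)
  moreover have "(\<lambda>r. C (Lam_s (r, t) + r) * (Lam_ss (r, t) + 1)) = (\<lambda>r. Lam_t (r, t))"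
    using Lam_t_eq[OF assms] by auto
  ultimately show ?thesis
    using DERIV_unique family_has_derivative_fst[OF in_family_derivatives(4), of t s] by force
qed

lemma partial_snd_Lam_ss: "partial_snd Lam_ss = partial_fst (partial_fst Lam_t)"
proof -
  have "partial_snd Lam_ss = partial_fst (partial_snd Lam_s)"
    unfolding Lam_ss_def by (rule family_partial_snd_fst[OF in_family_derivatives(2)])
  also have "partial_snd Lam_s = partial_fst Lam_t"
    unfolding Lam_s_def Lam_t_def by (rule family_partial_snd_fst[OF in_family_derivatives(1)])
  finally show ?thesis .
qed

lemma partial_fst_periodic:
  assumes g: "g \<in> F" and g_periodic: "\<And>r. g (r + 2*pi, t) = g (r, t)"
  shows "partial_fst g (s + 2*pi, t) = partial_fst g (s, t)"
proof -
  have "((\<lambda>r. g (r + 2*pi, t)) has_real_derivative partial_fst g (s + 2*pi, t) * 1) (at s)"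
    by (rule DERIV_chain2[OF family_has_derivative_fst[OF g]]) (auto intro!: derivative_eq_intros)
  then have "((\<lambda>r. g (r, t)) has_real_derivative partial_fst g (s + 2*pi, t)) (at s)"
    using g_periodic by simp
  then show ?thesis using family_has_derivative_fst[OF g, of t s] DERIV_unique by blast
qed

lemma Lam_s_periodic: "t \<ge> 0 \<Longrightarrow> Lam_s (s + 2*pi, t) = Lam_s (s, t)"
  unfolding Lam_s_def
  by (rule partial_fst_periodic[OF in_family_derivatives(1)]) (simp add: Lam_def periodic)

lemma Lam_ss_periodic: "t \<ge> 0 \<Longrightarrow> Lam_ss (s + 2*pi, t) = Lam_ss (s, t)"
  unfolding Lam_ss_def
  by (rule partial_fst_periodic[OF in_family_derivatives(2)]) (simp add: Lam_s_periodic)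

lemma partial_fst_Lam_t_periodic:
  assumes "t > 0"
  shows "partial_fst Lam_t (s + 2*pi, t) = partial_fst Lam_t (s, t)"
proof (rule partial_fst_periodic[OF in_family_derivatives(4)])
  fix r
  have "((\<lambda>\<tau>. Lam (r, \<tau>)) has_real_derivative Lam_t (r + 2*pi, t)) (at t)"
    unfolding Lam_t_def by (rule has_field_derivative_transform_within_open
        [OF family_has_derivative_snd[OF in_family_derivatives(1), of "r + 2*pi" t], where S = "{0<..}"])
      (use assms in \<open>auto simp: Lam_def periodic\<close>)
  then show "Lam_t (r + 2*pi, t) = Lam_t (r, t)"
    using family_has_derivative_snd[OF in_family_derivatives(1), of r t] DERIV_unique
    unfolding Lam_t_def by blast
qed


definition "tv t = integral {0..2*pi} (\<lambda>s. \<bar>Lam_ss (s, t) + 1\<bar>)"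

definition "tv_reg \<delta> t = integral {0..2*pi} (\<lambda>s. sqrt ((Lam_ss (s, t) + 1)\<^sup>2 + \<delta>\<^sup>2))"

lemma family_continuous_on_swap: "g \<in> F \<Longrightarrow> continuous_on S (\<lambda>x. g (snd x, fst x))"
  by (rule continuous_on_compose2[OF family_continuous_on]) (auto intro!: continuous_intros)

lemma has_real_derivative_tv_reg:
  assumes \<delta>: "\<delta> > 0"
  shows "(tv_reg \<delta> has_real_derivative integral {0..2*pi}
     (\<lambda>s. (Lam_ss (s, \<tau>) + 1) / sqrt ((Lam_ss (s, \<tau>) + 1)\<^sup>2 + \<delta>\<^sup>2) * partial_snd Lam_ss (s, \<tau>))) (at \<tau>)"
proof -
  note cont_Lam_ss = family_continuous_on_slice[OF in_family_derivatives(3)]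
  have "((\<lambda>x. integral (cbox 0 (2*pi)) (\<lambda>s. sqrt ((Lam_ss (s, x) + 1)\<^sup>2 + \<delta>\<^sup>2))) has_field_derivative
     integral (cbox 0 (2*pi)) (\<lambda>s. (Lam_ss (s, \<tau>) + 1) / sqrt ((Lam_ss (s, \<tau>) + 1)\<^sup>2 + \<delta>\<^sup>2)
       * partial_snd Lam_ss (s, \<tau>))) (at \<tau> within UNIV)"
  proof (rule leibniz_rule_field_derivative)
    fix x s :: real
    have "((\<lambda>x. Lam_ss (s, x) + 1) has_real_derivative partial_snd Lam_ss (s, x)) (at x)"
      using family_has_derivative_snd[OF in_family_derivatives(3), of s x]
      by (auto intro!: derivative_eq_intros)
    from DERIV_chain2[OF has_real_derivative_sqrt_power2_add[OF \<delta>] this]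
    show "((\<lambda>x. sqrt ((Lam_ss (s, x) + 1)\<^sup>2 + \<delta>\<^sup>2)) has_field_derivative
        (Lam_ss (s, x) + 1) / sqrt ((Lam_ss (s, x) + 1)\<^sup>2 + \<delta>\<^sup>2) * partial_snd Lam_ss (s, x))
        (at x within UNIV)"
      by simp
  next
    fix x :: real
    show "(\<lambda>s. sqrt ((Lam_ss (s, x) + 1)\<^sup>2 + \<delta>\<^sup>2)) integrable_on cbox 0 (2*pi)"
      unfolding box_real by (intro integrable_continuous_interval continuous_intros cont_Lam_ss)
  next
    have "continuous_on UNIV (\<lambda>x. (Lam_ss (snd x, fst x) + 1) / sqrt ((Lam_ss (snd x, fst x) + 1)\<^sup>2 + \<delta>\<^sup>2)
        * partial_snd Lam_ss (snd x, fst x))"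
      using \<delta> by (intro continuous_intros family_continuous_on_swap in_family_derivatives)
        (auto simp: add_nonneg_pos)
    then show "continuous_on (UNIV \<times> cbox 0 (2*pi)) (\<lambda>(x, s).
        (Lam_ss (s, x) + 1) / sqrt ((Lam_ss (s, x) + 1)\<^sup>2 + \<delta>\<^sup>2) * partial_snd Lam_ss (s, x))"
      by (auto simp: case_prod_unfold intro: continuous_on_subset)
  qed auto
  then show ?thesis by (simp add: tv_reg_def[abs_def] box_real)
qed

text \<open>Integration by parts over one period; the boundary terms cancel by periodicity.\<close>

lemma tv_reg_derivative_eq:
  assumes \<delta>: "\<delta> > 0" and t: "t > 0"
  shows "integral {0..2*pi}
      (\<lambda>s. (Lam_ss (s, t) + 1) / sqrt ((Lam_ss (s, t) + 1)\<^sup>2 + \<delta>\<^sup>2) * partial_snd Lam_ss (s, t))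
    = - integral {0..2*pi} (\<lambda>s. partial_fst Lam_t (s, t)
        * (\<delta>\<^sup>2 / sqrt ((Lam_ss (s, t) + 1)\<^sup>2 + \<delta>\<^sup>2) ^ 3 * partial_fst Lam_ss (s, t)))"
proof -
  define f where "f = (\<lambda>s. partial_fst Lam_t (s, t))"
  define f' where "f' = (\<lambda>s. partial_fst (partial_fst Lam_t) (s, t))"
  define g where "g = (\<lambda>s. (Lam_ss (s, t) + 1) / sqrt ((Lam_ss (s, t) + 1)\<^sup>2 + \<delta>\<^sup>2))"
  define g' where "g' = (\<lambda>s. \<delta>\<^sup>2 / sqrt ((Lam_ss (s, t) + 1)\<^sup>2 + \<delta>\<^sup>2) ^ 3 * partial_fst Lam_ss (s, t))"
  note slice = family_continuous_on_slice[OF in_family_derivatives(3)]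
    family_continuous_on_slice[OF in_family_derivatives(5)]
    family_continuous_on_slice[OF in_family_derivatives(6)]
  have "(f has_real_derivative f' s) (at s)" for s
    unfolding f_def f'_def by (rule family_has_derivative_fst[OF in_family_derivatives(5)])
  moreover have "(g has_real_derivative g' s) (at s)" for s
  proof -
    have "((\<lambda>s. Lam_ss (s, t) + 1) has_real_derivative partial_fst Lam_ss (s, t)) (at s)"
      using family_has_derivative_fst[OF in_family_derivatives(3), of t s]
      by (auto intro!: derivative_eq_intros)
    from DERIV_chain2[OF has_real_derivative_divide_sqrt_power2_add[OF \<delta>] this]
    show ?thesis by (simp add: g_def g'_def)
  qed
  moreover have "continuous_on {0..2*pi} f" "continuous_on {0..2*pi} g"
    "continuous_on {0..2*pi} (\<lambda>s. f s * g' s)"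
    unfolding f_def g_def g'_def using \<delta>
    by (auto intro!: continuous_intros slice simp: add_nonneg_pos)
  moreover have "f (2*pi) * g (2*pi) = f 0 * g 0"
    using partial_fst_Lam_t_periodic[OF t, of 0] Lam_ss_periodic[of t 0] t by (simp add: f_def g_def)
  ultimately have "((\<lambda>s. f' s * g s) has_integral - integral {0..2*pi} (\<lambda>s. f s * g' s)) {0..2*pi}"
    by (intro integration_by_parts[OF bounded_bilinear_mult, of 0 "2*pi" f g f' g'])
      (auto simp: has_real_derivative_iff_has_vector_derivative
        intro!: has_integral_integral integrable_continuous_interval)
  moreover have "(\<lambda>s. (Lam_ss (s, t) + 1) / sqrt ((Lam_ss (s, t) + 1)\<^sup>2 + \<delta>\<^sup>2) * partial_snd Lam_ss (s, t))
      = (\<lambda>s. f' s * g s)"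
    by (auto simp: f'_def g_def partial_snd_Lam_ss)
  ultimately show ?thesis by (simp add: integral_unique f_def g'_def)
qed

lemma tv_reg_derivative_le:
  assumes \<delta>: "\<delta> > 0" "\<delta> \<le> 1" and t: "t > 0"
    and B: "\<And>s. s \<in> {0..2*pi} \<Longrightarrow> \<bar>Lam_ss (s, t) + 1\<bar> \<le> B"
  shows "integral {0..2*pi}
      (\<lambda>s. (Lam_ss (s, t) + 1) / sqrt ((Lam_ss (s, t) + 1)\<^sup>2 + \<delta>\<^sup>2) * partial_snd Lam_ss (s, t))
    \<le> 2 * pi * (\<delta>\<^sup>2 * L\<^sup>2 * (B + 1) / (4 * e\<^sup>2))"
proof -
  define h where "h = (\<lambda>s. - (partial_fst Lam_t (s, t)
    * (\<delta>\<^sup>2 / sqrt ((Lam_ss (s, t) + 1)\<^sup>2 + \<delta>\<^sup>2) ^ 3 * partial_fst Lam_ss (s, t))))"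
  have "h integrable_on {0..2*pi}"
    unfolding h_def using \<delta>
    by (intro integrable_continuous_interval continuous_intros family_continuous_on_slice
        in_family_derivatives) (auto simp: add_nonneg_pos)
  moreover have "h s \<le> \<delta>\<^sup>2 * L\<^sup>2 * (B + 1) / (4 * e\<^sup>2)" if s: "s \<in> {0..2*pi}" for s
  proof -
    have "h s \<le> \<delta>\<^sup>2 * L\<^sup>2 * sqrt ((Lam_ss (s, t) + 1)\<^sup>2 + \<delta>\<^sup>2) / (4 * e\<^sup>2)"
      unfolding h_def partial_fst_Lam_t_eq[OF t]
      by (rule dissipation_le[OF C_ge e_pos C'_bounded \<delta>(1)])
    also have "\<dots> \<le> \<delta>\<^sup>2 * L\<^sup>2 * (B + 1) / (4 * e\<^sup>2)"
    proof -
      have "sqrt ((Lam_ss (s, t) + 1)\<^sup>2 + \<delta>\<^sup>2) \<le> \<bar>Lam_ss (s, t) + 1\<bar> + \<delta>"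
        by (rule real_le_lsqrt) (use \<delta> in \<open>auto simp: power2_eq_square algebra_simps\<close>)
      also have "\<dots> \<le> B + 1" using B[OF s] \<delta> by linarith
      finally show ?thesis by (intro divide_right_mono mult_left_mono) auto
    qed
    finally show ?thesis .
  qed
  ultimately have "integral {0..2*pi} h \<le> integral {0..2*pi} (\<lambda>s. \<delta>\<^sup>2 * L\<^sup>2 * (B + 1) / (4 * e\<^sup>2))"
    by (intro integral_le) auto
  moreover have "integral {0..2*pi}
      (\<lambda>s. (Lam_ss (s, t) + 1) / sqrt ((Lam_ss (s, t) + 1)\<^sup>2 + \<delta>\<^sup>2) * partial_snd Lam_ss (s, t))
    = integral {0..2*pi} h"
    unfolding tv_reg_derivative_eq[OF \<delta>(1) t] h_def by simp
  ultimately show ?thesis by simp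
qed

lemma tv_le_tv_reg: "\<delta> > 0 \<Longrightarrow> tv t \<le> tv_reg \<delta> t"
  unfolding tv_def tv_reg_def
  by (intro integral_le integrable_continuous_interval continuous_intros
      family_continuous_on_slice in_family_derivatives real_sqrt_ge_abs1)

lemma tv_reg_le_tv: "\<delta> > 0 \<Longrightarrow> tv_reg \<delta> t \<le> tv t + 2 * pi * \<delta>"
proof -
  assume \<delta>: "\<delta> > 0"
  note cont = family_continuous_on_slice[OF in_family_derivatives(3)]
  have "tv_reg \<delta> t \<le> integral {0..2*pi} (\<lambda>s. \<bar>Lam_ss (s, t) + 1\<bar> + \<delta>)"
    unfolding tv_reg_def
    by (rule integral_le) (auto intro!: integrable_continuous_interval continuous_intros cont
        real_le_lsqrt simp: power2_eq_square algebra_simps \<delta> less_imp_le)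
  also have "\<dots> = tv t + 2 * pi * \<delta>"
    unfolding tv_def by (subst integral_add) (auto intro!: integrable_continuous_interval continuous_intros cont)
  finally show ?thesis .
qed

lemma tv_le_tv_0_add:
  assumes t: "t > 0"
  obtains K where "\<And>\<delta>. 0 < \<delta> \<Longrightarrow> \<delta> \<le> 1 \<Longrightarrow> tv t \<le> tv 0 + \<delta> * K"
proof -
  have "compact ((\<lambda>z. Lam_ss z + 1) ` ({0..2*pi} \<times> {0..t}))"
    by (intro compact_continuous_image compact_Times compact_Icc continuous_intros
        family_continuous_on in_family_derivatives)
  then obtain B where B: "\<And>s \<tau>. s \<in> {0..2*pi} \<Longrightarrow> \<tau> \<in> {0..t} \<Longrightarrow> \<bar>Lam_ss (s, \<tau>) + 1\<bar> \<le> B"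
    by (force dest!: compact_imp_bounded simp: bounded_real)
  define K where "K = 2 * pi * (L\<^sup>2 * (B + 1) / (4 * e\<^sup>2))"
  have K: "K \<ge> 0"
    using B[of 0 0] t e_pos by (simp add: K_def)
  show ?thesis
  proof
    fix \<delta> :: real assume \<delta>: "0 < \<delta>" "\<delta> \<le> 1"
    obtain \<xi> where \<xi>: "0 < \<xi>" "\<xi> < t" and mvt: "tv_reg \<delta> t - tv_reg \<delta> 0 = (t - 0) * integral {0..2*pi}
        (\<lambda>s. (Lam_ss (s, \<xi>) + 1) / sqrt ((Lam_ss (s, \<xi>) + 1)\<^sup>2 + \<delta>\<^sup>2) * partial_snd Lam_ss (s, \<xi>))"
      using MVT2[OF t, of "tv_reg \<delta>", OF has_real_derivative_tv_reg[OF \<delta>(1)]] by blast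
    have "integral {0..2*pi}
        (\<lambda>s. (Lam_ss (s, \<xi>) + 1) / sqrt ((Lam_ss (s, \<xi>) + 1)\<^sup>2 + \<delta>\<^sup>2) * partial_snd Lam_ss (s, \<xi>))
        \<le> 2 * pi * (\<delta>\<^sup>2 * L\<^sup>2 * (B + 1) / (4 * e\<^sup>2))"
      using B \<xi> by (intro tv_reg_derivative_le[OF \<delta> \<xi>(1)]) auto
    also have "\<dots> = \<delta>\<^sup>2 * K" by (simp add: K_def)
    also have "\<dots> \<le> \<delta> * K"
      using \<delta> K by (simp add: power2_eq_square mult_right_mono)
    finally have "tv_reg \<delta> t - tv_reg \<delta> 0 \<le> t * (\<delta> * K)"
      using mvt t by (simp add: mult_left_mono)
    then show "tv t \<le> tv 0 + \<delta> * (2 * pi + t * K)"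
      using tv_le_tv_reg[OF \<delta>(1), of t] tv_reg_le_tv[OF \<delta>(1), of 0] by (simp add: algebra_simps)
  qed
qed

lemma tv_le_tv_0:
  assumes "t > 0"
  shows "tv t \<le> tv 0"
proof -
  obtain K where K: "\<And>\<delta>. 0 < \<delta> \<Longrightarrow> \<delta> \<le> 1 \<Longrightarrow> tv t \<le> tv 0 + \<delta> * K"
    using tv_le_tv_0_add[OF assms] by blast
  show ?thesis
  proof (rule field_le_epsilon)
    fix \<eta> :: real assume \<eta>: "\<eta> > 0"
    define \<delta> where "\<delta> = min 1 (\<eta> / (\<bar>K\<bar> + 1))"
    have \<delta>: "0 < \<delta>" "\<delta> \<le> 1" using \<eta> by (auto simp: \<delta>_def)
    have "\<delta> * K \<le> \<delta> * (\<bar>K\<bar> + 1)" using \<delta> by (intro mult_left_mono) auto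
    also have "\<dots> \<le> \<eta> / (\<bar>K\<bar> + 1) * (\<bar>K\<bar> + 1)"
      by (intro mult_right_mono) (auto simp: \<delta>_def)
    finally have "\<delta> * K \<le> \<eta>" by simp
    then show "tv t \<le> tv 0 + \<eta>" using K[OF \<delta>] by simp
  qed
qed

lemma phi_diff_le:
  assumes "a \<le> b"
  shows "\<bar>(Lam_s (b, t) + b) - (Lam_s (a, t) + a)\<bar> \<le> integral {a..b} (\<lambda>s. \<bar>Lam_ss (s, t) + 1\<bar>)"
proof -
  have cont: "continuous_on {a..b} (\<lambda>s. Lam_ss (s, t))"
    by (rule family_continuous_on_slice[OF in_family_derivatives(3)])
  have "((\<lambda>s. Lam_ss (s, t) + 1) has_integral (Lam_s (b, t) + b) - (Lam_s (a, t) + a)) {a..b}"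
    using has_real_derivative_phi assms
    by (intro fundamental_theorem_of_calculus)
      (auto simp: has_real_derivative_iff_has_vector_derivative[symmetric] intro: has_field_derivative_at_within)
  moreover have "norm (integral {a..b} (\<lambda>s. Lam_ss (s, t) + 1)) \<le> integral {a..b} (\<lambda>s. \<bar>Lam_ss (s, t) + 1\<bar>)"
    by (intro integral_norm_bound_integral integrable_continuous_interval continuous_intros cont) auto
  ultimately show ?thesis by (simp add: integral_unique)
qed

lemma total_variation_phi_le_tv:
  "total_variation (\<lambda>s. deriv (\<lambda>r. \<Lambda> r t) s + s) {0..<2*pi} \<le> ereal (tv t)"
proof -
  have "continuous_on UNIV (\<lambda>s. \<bar>Lam_ss (s, t) + 1\<bar>)"
    by (intro continuous_intros family_continuous_on_slice in_family_derivatives)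
  then show ?thesis
    unfolding tv_def deriv_\<Lambda>_eq_Lam_s
    by (rule total_variation_le_integral) (auto intro: phi_diff_le)
qed

text \<open>By Rolle's theorem \<open>Lam_s\<close> vanishes somewhere in each period.\<close>

lemma abs_phi_le:
  assumes t: "t > 0" and s: "0 \<le> s" "s \<le> 2*pi"
  shows "\<bar>Lam_s (s, t) + s\<bar> \<le> 2 * pi + tv t"
proof -
  have "\<exists>z. 0 < z \<and> z < 2*pi \<and> (\<lambda>h. Lam_s (z, t) * h) = (\<lambda>h. 0)"
  proof (rule Rolle_deriv[where f = "\<lambda>r. \<Lambda> r t"])
    show "\<Lambda> 0 t = \<Lambda> (2 * pi) t" using periodic[of t 0] t by simp
    show "continuous_on {0..2 * pi} (\<lambda>r. \<Lambda> r t)"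
      using family_continuous_on_slice[OF in_family_derivatives(1)] by (simp add: Lam_def)
    show "((\<lambda>r. \<Lambda> r t) has_derivative (\<lambda>h. Lam_s (x, t) * h)) (at x)" for x
      using family_has_derivative_fst[OF in_family_derivatives(1), of t x]
      by (simp add: Lam_def Lam_s_def has_field_derivative_def)
  qed simp
  then obtain z where z: "0 < z" "z < 2*pi" "Lam_s (z, t) = 0"
    by (metis mult_cancel_left1)
  have integrable: "(\<lambda>s. \<bar>Lam_ss (s, t) + 1\<bar>) integrable_on {a..b}" for a b
    by (intro integrable_continuous_interval continuous_intros family_continuous_on_slice
        in_family_derivatives)
  have "\<bar>(Lam_s (s, t) + s) - (Lam_s (z, t) + z)\<bar> \<le> integral {min s z..max s z} (\<lambda>s. \<bar>Lam_ss (s, t) + 1\<bar>)"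
    using phi_diff_le[of s z t] phi_diff_le[of z s t] by (cases "s \<le> z") (auto simp: abs_minus_commute)
  also have "\<dots> \<le> tv t"
    unfolding tv_def using s z by (intro integral_subset_le integrable) auto
  finally show ?thesis using z by linarith
qed

lemma tv_0_eq: "tv 0 = integral {0..2*pi} (\<lambda>s. \<bar>deriv (\<lambda>r. deriv (\<lambda>q. \<Lambda> q 0) r + r) s\<bar>)"
proof -
  have "deriv (\<lambda>r. deriv (\<lambda>q. \<Lambda> q 0) r + r) s = Lam_ss (s, 0) + 1" for s
    unfolding deriv_\<Lambda>_eq_Lam_s by (rule DERIV_imp_deriv[OF has_real_derivative_phi])
  then show ?thesis by (simp add: tv_def)
qed

end

lemma regularized_solution_bounds:
  fixes \<Lambda> :: "real \<Rightarrow> real \<Rightarrow> real" and e :: real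
  assumes e: "e > 0"
    and smooth: "smooth2 (\<lambda>z. \<Lambda> (fst z) (snd z))"
    and periodic: "\<And>s t. t \<ge> 0 \<Longrightarrow> \<Lambda> (s + 2*pi) t = \<Lambda> s t"
    and pde: "\<And>s t. t > 0 \<Longrightarrow>
      deriv (\<lambda>\<tau>. \<Lambda> s \<tau>) t = deriv (\<lambda>\<sigma>. deriv (Jeps e) (deriv (\<lambda>r. \<Lambda> r t) \<sigma> + \<sigma>)) s"
  defines "V0 \<equiv> integral {0..2*pi} (\<lambda>s. \<bar>deriv (\<lambda>r. deriv (\<lambda>q. \<Lambda> q 0) r + r) s\<bar>)"
  assumes t: "t > 0"
  shows "\<And>s. 0 \<le> s \<Longrightarrow> s < 2*pi \<Longrightarrow> \<bar>deriv (\<lambda>r. \<Lambda> r t) s + s\<bar> \<le> 2 * pi + V0"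
    and "total_variation (\<lambda>s. deriv (\<lambda>r. \<Lambda> r t) s + s) {0..<2*pi} \<le> ereal (2 * pi + V0)"
proof -
  obtain F where F: "(\<lambda>z. \<Lambda> (fst z) (snd z)) \<in> F"
    "\<And>g. g \<in> F \<Longrightarrow> g differentiable_on UNIV \<and> partial_fst g \<in> F \<and> partial_snd g \<in> F"
    using smooth unfolding smooth2_def partial_fst_def[abs_def] partial_snd_def[abs_def] by blast
  obtain a c c' L where J: "\<And>x. (Jeps e has_real_derivative a x) (at x)"
    "\<And>x. (a has_real_derivative c x) (at x)" "\<And>x. (c has_real_derivative c' x) (at x)"
    "\<And>x. e\<^sup>2 \<le> c x" "\<And>x. \<bar>c' x\<bar> \<le> L"
    using Jeps_derivatives[OF e] by blast
  have "deriv (Jeps e) = a" using J(1) by (auto intro!: DERIV_imp_deriv)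
  then interpret periodic_solution \<Lambda> F a c c' e L
  proof unfold_locales
    show "\<And>g. g \<in> F \<Longrightarrow> g differentiable_on UNIV" "\<And>g. g \<in> F \<Longrightarrow> partial_fst g \<in> F"
      "\<And>g. g \<in> F \<Longrightarrow> partial_snd g \<in> F"
      using F(2) by blast+
  qed (use e F(1) periodic pde J in simp_all)
  have tv_le: "tv t \<le> V0" using tv_le_tv_0[OF t] by (simp add: tv_0_eq V0_def)
  show "\<bar>deriv (\<lambda>r. \<Lambda> r t) s + s\<bar> \<le> 2 * pi + V0" if "0 \<le> s" "s < 2*pi" for s
    using abs_phi_le[OF t, of s] that tv_le by (simp add: deriv_\<Lambda>_eq_Lam_s)
  show "total_variation (\<lambda>s. deriv (\<lambda>r. \<Lambda> r t) s + s) {0..<2*pi} \<le> ereal (2 * pi + V0)"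
    using total_variation_phi_le_tv[of t] tv_le by (simp add: order_trans)
qed

theorem corollary3p1:
  fixes \<Lambda> :: "real \<Rightarrow> real \<Rightarrow> real \<Rightarrow> real"   (* \<Lambda> \<epsilon> s t *)
    and \<Lambda>0 :: "real \<Rightarrow> real \<Rightarrow> real"            (* \<Lambda>0 \<epsilon> s *)
  assumes init_smooth: "\<And>\<epsilon>. \<epsilon> > 0 \<Longrightarrow> smooth1 (\<Lambda>0 \<epsilon>)"
    and init_periodic: "\<And>\<epsilon> s. \<epsilon> > 0 \<Longrightarrow> \<Lambda>0 \<epsilon> (s + 2*pi) = \<Lambda>0 \<epsilon> s"
    and sol_smooth: "\<And>\<epsilon>. \<epsilon> > 0 \<Longrightarrow> smooth2 (\<lambda>z. \<Lambda> \<epsilon> (fst z) (snd z))"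
    and sol_periodic: "\<And>\<epsilon> s t. \<epsilon> > 0 \<Longrightarrow> t \<ge> 0 \<Longrightarrow> \<Lambda> \<epsilon> (s + 2*pi) t = \<Lambda> \<epsilon> s t"
    and sol_pde: "\<And>\<epsilon> s t. \<epsilon> > 0 \<Longrightarrow> t > 0 \<Longrightarrow>
        deriv (\<lambda>\<tau>. \<Lambda> \<epsilon> s \<tau>) t =
        deriv (\<lambda>\<sigma>. deriv (Jeps \<epsilon>) (deriv (\<lambda>r. \<Lambda> \<epsilon> r t) \<sigma> + \<sigma>)) s"
    and sol_init: "\<And>\<epsilon> s. \<epsilon> > 0 \<Longrightarrow> \<Lambda> \<epsilon> s 0 = \<Lambda>0 \<epsilon> s"
    and init_Linf: "\<exists>C. \<forall>\<epsilon>>0. \<forall>s\<in>{0..2*pi}. \<bar>deriv (\<Lambda>0 \<epsilon>) s + s\<bar> \<le> C"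
    and init_L1: "\<exists>C. \<forall>\<epsilon>>0.
        integral {0..2*pi} (\<lambda>s. \<bar>deriv (\<lambda>r. deriv (\<Lambda>0 \<epsilon>) r + r) s\<bar>) \<le> C"
  shows "\<exists>M. \<forall>\<epsilon>>0. \<forall>T>0.
     (\<forall>s t. 0 \<le> s \<and> s < 2*pi \<and> 0 < t \<and> t < T \<longrightarrow>
        \<bar>deriv (\<lambda>r. \<Lambda> \<epsilon> r t) s + s\<bar> \<le> M) \<and>
     (\<forall>t. 0 < t \<and> t < T \<longrightarrow>
        total_variation (\<lambda>s. deriv (\<lambda>r. \<Lambda> \<epsilon> r t) s + s) {0..<2*pi} \<le> ereal M)"
proof -
  obtain C where C: "\<And>\<epsilon>. \<epsilon> > 0 \<Longrightarrow>
      integral {0..2*pi} (\<lambda>s. \<bar>deriv (\<lambda>r. deriv (\<Lambda>0 \<epsilon>) r + r) s\<bar>) \<le> C"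
    using init_L1 by blast
  have V0_le: "integral {0..2*pi} (\<lambda>s. \<bar>deriv (\<lambda>r. deriv (\<lambda>q. \<Lambda> \<epsilon> q 0) r + r) s\<bar>) \<le> C"
    if "\<epsilon> > 0" for \<epsilon>
    using C[OF that] sol_init[OF that] by simp
  note bounds = regularized_solution_bounds[OF _ sol_smooth sol_periodic sol_pde]
  show ?thesis
  proof (intro exI allI impI conjI)
    fix \<epsilon> T s t :: real
    assume "\<epsilon> > 0" "0 \<le> s \<and> s < 2*pi \<and> 0 < t \<and> t < T"
    then show "\<bar>deriv (\<lambda>r. \<Lambda> \<epsilon> r t) s + s\<bar> \<le> 2 * pi + C"
      using bounds(1)[of \<epsilon> t s] V0_le[of \<epsilon>] by force
  next
    fix \<epsilon> T t :: real
    assume "\<epsilon> > 0" "0 < t \<and> t < T"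
    then have "total_variation (\<lambda>s. deriv (\<lambda>r. \<Lambda> \<epsilon> r t) s + s) {0..<2*pi}
        \<le> ereal (2 * pi + integral {0..2*pi} (\<lambda>s. \<bar>deriv (\<lambda>r. deriv (\<lambda>q. \<Lambda> \<epsilon> q 0) r + r) s\<bar>))"
      by (intro bounds(2)) auto
    also have "\<dots> \<le> ereal (2 * pi + C)" using V0_le \<open>\<epsilon> > 0\<close> by simp
    finally show "total_variation (\<lambda>s. deriv (\<lambda>r. \<Lambda> \<epsilon> r t) s + s) {0..<2*pi} \<le> ereal (2 * pi + C)" .
  qed
qed

end
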